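(* Let $\mathcal G$ be a connected undirected graph on $N$ nodes with unweighted adjacency matrix $\mathbf A$, degree matrix $\mathbf D$, and normalized adjacency $\widehat{\mathbf A}=\mathbf D^{-1/2}\mathbf A\mathbf D^{-1/2}$. For each layer $\ell$, let $\mathbf P_\theta(\ell)=\alpha^{(\ell)}_\theta\,\mathbf v\mathbf v^\top$ where $\alpha^{(\ell)}_\theta\in\mathbb R$ and $\mathbf v=\frac{1}{\sqrt N}\mathbf 1\in\mathbb R^N$, and let $\widehat{\mathbf W}(\ell)\in\mathbb R^{d\times d}$ be antisymmetric, i.e. $\widehat{\mathbf W}(\ell)^\top=-\widehat{\mathbf W}(\ell)$. Consider, with step size $\epsilon>0$, the update $$\mathbf H(\ell+1)=\mathbf H(\ell)+\epsilon\big(\mathbf P_\theta(\ell)\mathbf H(\ell)\widehat{\mathbf W}(\ell)+\widehat{\mathbf A}\mathbf H(\ell)\widehat{\mathbf W}(\ell)\big),\qquad \mathbf H(\ell)\in\mathbb R^{N\times d},$$ and let $\mathbf J(\ell)=\frac{\partial\,\mathrm{vec}(\mathbf H(\ell+1))}{\partial\,\mathrm{vec}(\mathbf H(\ell))}\in\mathbb R^{Nd\times Nd}$. Then the layerwise Jacobian energy is stable (no exponential growth or decay per layer): $\|\mathbf J(\ell)\|_2=1+\mathcal O(\epsilon^2)$.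
   Context: $\mathrm{vec}$ denotes column-stacking vectorization, $\|\cdot\|_2$ is the spectral norm, and $\mathcal O(\epsilon^2)$ refers to $\epsilon\to 0$ with the other quantities ($\widehat{\mathbf A}$, $\mathbf P_\theta(\ell)$, $\widehat{\mathbf W}(\ell)$) fixed. *)

theory Defs
  imports "HOL-Analysis.Analysis" "HOL-Library.Landau_Symbols"
begin

definition is_adjacency :: "real^'n^'n \<Rightarrow> bool" where
  "is_adjacency A \<longleftrightarrow> (\<forall>i j. A$i$j = 0 \<or> A$i$j = 1) \<and> (\<forall>i j. A$i$j = A$j$i) \<and> (\<forall>i. A$i$i = 0)"

definition graph_connected :: "real^'n^'n \<Rightarrow> bool" where
  "graph_connected A \<longleftrightarrow> (\<forall>i j. (i, j) \<in> {(a, b). A$a$b = 1}\<^sup>*)"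

definition degree_mat :: "real^'n^'n \<Rightarrow> real^'n^'n" where
  "degree_mat A = (\<chi> i j. if i = j then (\<Sum>k\<in>UNIV. A$i$k) else 0)"

definition degree_inv_sqrt :: "real^'n^'n \<Rightarrow> real^'n^'n" where
  "degree_inv_sqrt A = (\<chi> i j. if i = j then 1 / sqrt (degree_mat A $ i $ i) else 0)"

definition norm_adj :: "real^'n^'n \<Rightarrow> real^'n^'n" where
  "norm_adj A = degree_inv_sqrt A ** A ** degree_inv_sqrt A"

definition vone :: "real^'n" where
  "vone = (\<chi> i. 1 / sqrt (real CARD('n)))"

definition Pmat :: "real \<Rightarrow> real^'n^'n" where
  "Pmat \<alpha> = \<alpha> *\<^sub>R (\<chi> i j. vone $ i * vone $ j)"

text \<open>Column-stacking vectorization of an N x d matrix: the entry in row i, column j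
  sits at index (j, i); ordering indices lexicographically gives column stacking.\<close>
definition vecm :: "real^'d^'n \<Rightarrow> real^('d \<times> 'n)" where
  "vecm H = (\<chi> p. H $ snd p $ fst p)"

definition unvecm :: "real^('d \<times> 'n) \<Rightarrow> real^'d^'n" where
  "unvecm x = (\<chi> i j. x $ (j, i))"

definition layer_update :: "real \<Rightarrow> real^'n^'n \<Rightarrow> real^'n^'n \<Rightarrow> real^'d^'d \<Rightarrow> real^'d^'n \<Rightarrow> real^'d^'n" where
  "layer_update \<epsilon> P Ahat W H = H + \<epsilon> *\<^sub>R (P ** H ** W + Ahat ** H ** W)"

text \<open>Jacobian matrix d vec(f(H)) / d vec(H) at H (entry (p,q) = d out_p / d in_q).\<close>
definition vec_jacobian :: "(real^'d^'n \<Rightarrow> real^'d^'n) \<Rightarrow> real^'d^'n \<Rightarrow> real^('d \<times> 'n)^('d \<times> 'n)" where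
  "vec_jacobian f H = matrix (frechet_derivative (\<lambda>x. vecm (f (unvecm x))) (at (vecm H)))"

definition spec_norm :: "real^'m^'k \<Rightarrow> real" where
  "spec_norm M = onorm (\<lambda>x. M *v x)"

end

theory Submission
  imports Defs
begin

text \<open>The layer map is linear, so its Jacobian is the map itself: X \<mapsto> X + \<epsilon> K X with
  K X = M X W, where M = P + Ahat is symmetric and W is antisymmetric. Such a K is skew for
  the Frobenius inner product, since <X, M X W> = <M X, X W> = - <X W, M X>. Hence
  |X + \<epsilon> K X|^2 = |X|^2 + \<epsilon>^2 |K X|^2, and the operator norm of the Jacobian lies between
  1 and 1 + \<epsilon>^2 |K|^2.\<close>

lemma norm_add_scaleR_orthogonal_power2:
  fixes x y :: "'a::real_inner"
  assumes "x \<bullet> y = 0"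
  shows "(norm (x + e *\<^sub>R y))\<^sup>2 = (norm x)\<^sup>2 + (e * norm y)\<^sup>2"
proof -
  have "(norm (x + e *\<^sub>R y))\<^sup>2 = x \<bullet> x + e\<^sup>2 * (y \<bullet> y)"
    unfolding power2_norm_eq_inner using assms
    by (simp add: algebra_simps inner_commute power2_eq_square)
  then show ?thesis by (simp add: power2_norm_eq_inner power_mult_distrib)
qed

lemma bounded_linear_id_plus_scaleR:
  assumes "bounded_linear K"
  shows "bounded_linear (\<lambda>x. x + e *\<^sub>R K x)"
  by (intro bounded_linear_add bounded_linear_ident
      bounded_linear_compose[OF bounded_linear_scaleR_right assms])

lemma onorm_id_plus_skew_ge_1:
  fixes K :: "'a::{real_inner, perfect_space} \<Rightarrow> 'a"
  assumes "bounded_linear K" and "\<And>x. x \<bullet> K x = 0"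
  shows "1 \<le> onorm (\<lambda>x. x + e *\<^sub>R K x)"
proof -
  have "{0::'a} \<noteq> UNIV" by (metis not_open_singleton open_UNIV)
  then obtain x :: 'a where "x \<noteq> 0" by fast
  have "norm x \<le> norm (x + e *\<^sub>R K x)"
    by (rule power2_le_imp_le) (simp_all add: norm_add_scaleR_orthogonal_power2 assms(2))
  with \<open>x \<noteq> 0\<close> have "1 \<le> norm (x + e *\<^sub>R K x) / norm x" by simp
  also have "\<dots> \<le> onorm (\<lambda>x. x + e *\<^sub>R K x)"
    by (intro le_onorm bounded_linear_id_plus_scaleR assms(1))
  finally show ?thesis .
qed

lemma onorm_id_plus_skew_le:
  fixes K :: "'a::{real_inner, perfect_space} \<Rightarrow> 'a"
  assumes "bounded_linear K" and "\<And>x. x \<bullet> K x = 0"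
  shows "onorm (\<lambda>x. x + e *\<^sub>R K x) \<le> 1 + (e * onorm K)\<^sup>2"
proof (rule onorm_le)
  fix x
  have "(norm (x + e *\<^sub>R K x))\<^sup>2 = (norm x)\<^sup>2 + (e * norm (K x))\<^sup>2"
    by (simp add: norm_add_scaleR_orthogonal_power2 assms(2))
  also have "\<dots> \<le> (norm x)\<^sup>2 + (e * onorm K * norm x)\<^sup>2"
  proof -
    have "(norm (K x))\<^sup>2 \<le> (onorm K * norm x)\<^sup>2"
      using onorm[OF assms(1)] by (intro power_mono) simp_all
    from mult_left_mono[OF this zero_le_power2[of e]] show ?thesis
      by (simp add: power_mult_distrib mult.assoc)
  qed
  also have "\<dots> \<le> ((1 + (e * onorm K)\<^sup>2) * norm x)\<^sup>2"
  proof -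
    have "0 \<le> (e * onorm K * norm x)\<^sup>2 + ((e * onorm K)\<^sup>2 * norm x)\<^sup>2" by simp
    then show ?thesis by (simp add: power2_eq_square algebra_simps)
  qed
  finally show "norm (x + e *\<^sub>R K x) \<le> (1 + (e * onorm K)\<^sup>2) * norm x"
    by (rule power2_le_imp_le) simp
qed

lemma trace_transpose: "trace (transpose A) = trace A"
  by (simp add: trace_def transpose_def)

lemma trace_symmetric_mult_antisymmetric:
  fixes S W :: "real^'n^'n"
  assumes "transpose S = S" and "transpose W = - W"
  shows "trace (S ** W) = 0"
proof -
  have "trace (S ** W) = trace (transpose W ** transpose S)"
    by (simp only: trace_transpose flip: matrix_transpose_mul)
  also have "\<dots> = - trace (W ** S)"
    unfolding assms by (simp add: trace_def matrix_matrix_mult_def sum_negf)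
  also have "\<dots> = - trace (S ** W)"
    by (metis trace_mul_sym)
  finally show ?thesis by simp
qed

lemma inner_matrix_eq_trace: "X \<bullet> Y = trace (transpose X ** (Y :: real^'d^'n))"
  by (simp add: inner_vec_def trace_def transpose_def matrix_matrix_mult_def) (rule sum.swap)

lemma inner_symmetric_antisymmetric_sandwich:
  fixes M :: "real^'n^'n" and W :: "real^'d^'d" and X :: "real^'d^'n"
  assumes "transpose M = M" and "transpose W = - W"
  shows "X \<bullet> (M ** X ** W) = 0"
proof -
  have "transpose (transpose X ** M ** X) = transpose X ** M ** X"
    by (simp add: matrix_transpose_mul assms(1) matrix_mul_assoc)
  then have "trace ((transpose X ** M ** X) ** W) = 0"
    using assms(2) by (rule trace_symmetric_mult_antisymmetric)
  then show ?thesis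
    by (simp add: inner_matrix_eq_trace matrix_mul_assoc)
qed

lemma matrix_add_rdistrib: "(A + B) ** C = A ** C + B ** C"
  by (simp add: matrix_matrix_mult_def vec_eq_iff sum.distrib distrib_right)

lemma linear_matrix_sandwich: "linear (\<lambda>X. M ** X ** (W :: real^'d^'d))"
  by (rule linearI)
    (simp_all add: matrix_add_ldistrib matrix_add_rdistrib matrix_scalar_ac scalar_matrix_assoc)

lemma transpose_add: "transpose (A + B) = transpose A + transpose B"
  by (simp add: transpose_def vec_eq_iff)

lemma transpose_Pmat: "transpose (Pmat a) = Pmat a"
  by (simp add: Pmat_def transpose_def vec_eq_iff mult.commute)

lemma transpose_norm_adj:
  assumes "is_adjacency A"
  shows "transpose (norm_adj A) = norm_adj A"
proof -
  have "transpose (degree_inv_sqrt A) = degree_inv_sqrt A"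
    by (simp add: transpose_def degree_inv_sqrt_def vec_eq_iff)
  moreover have "transpose A = A"
    using assms by (simp add: transpose_def is_adjacency_def vec_eq_iff)
  ultimately show ?thesis
    by (simp add: norm_adj_def matrix_transpose_mul matrix_mul_assoc)
qed

lemma layer_update_eq: "layer_update e P Ahat W = (\<lambda>H. H + e *\<^sub>R ((P + Ahat) ** H ** W))"
  by (simp add: layer_update_def fun_eq_iff matrix_add_rdistrib)

lemma vecm_unvecm [simp]: "vecm (unvecm x) = x"
  by (simp add: vecm_def unvecm_def vec_eq_iff)

lemma unvecm_vecm [simp]: "unvecm (vecm X) = X"
  by (simp add: vecm_def unvecm_def vec_eq_iff)

lemma linear_vecm: "linear vecm"
  by (rule linearI) (simp_all add: vecm_def vec_eq_iff)

lemma linear_unvecm: "linear unvecm"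
  by (rule linearI) (simp_all add: unvecm_def vec_eq_iff)

lemma norm_vecm [simp]: "norm (vecm X) = norm X"
proof -
  have "vecm X \<bullet> vecm X = (\<Sum>j\<in>UNIV. \<Sum>i\<in>UNIV. X$i$j * X$i$j)"
    by (simp add: inner_vec_def vecm_def sum.cartesian_product case_prod_unfold
        flip: UNIV_Times_UNIV del: UNIV_Times_UNIV)
  also have "\<dots> = X \<bullet> X"
    by (simp add: inner_vec_def) (rule sum.swap)
  finally show ?thesis by (simp add: norm_eq_sqrt_inner)
qed

lemma norm_unvecm [simp]: "norm (unvecm x) = norm x"
  using norm_vecm[of "unvecm x"] by simp

lemma onorm_vecm_conjugate: "onorm (\<lambda>x. vecm (f (unvecm x))) = onorm f"
proof -
  have "range (\<lambda>x. norm (vecm (f (unvecm x))) / norm x) = (\<lambda>X. norm (f X) / norm X) ` range unvecm"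
    by (simp add: image_image)
  also have "range unvecm = UNIV"
    by (metis surjI unvecm_vecm)
  finally show ?thesis
    by (simp add: onorm_def)
qed

lemma spec_norm_vec_jacobian_linear:
  assumes "linear f"
  shows "spec_norm (vec_jacobian f H) = onorm f"
proof -
  let ?g = "\<lambda>x. vecm (f (unvecm x))"
  have "linear ?g"
    using linear_compose[OF linear_compose[OF linear_unvecm assms] linear_vecm]
    by (simp add: comp_def)
  then have "frechet_derivative ?g (at (vecm H)) = ?g"
    by (metis frechet_derivative_at linear_imp_has_derivative)
  with \<open>linear ?g\<close> show ?thesis
    by (simp add: vec_jacobian_def spec_norm_def matrix_works onorm_vecm_conjugate)
qed

theorem proposition2:
  fixes A :: "real^'n^'n"
    and \<alpha> :: "nat \<Rightarrow> real"
    and W :: "nat \<Rightarrow> real^'d^'d"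
    and lay :: nat
    and H :: "real^'d^'n"
  assumes "is_adjacency A"
    and "graph_connected A"
    and "\<forall>l. transpose (W l) = - W l"
  shows "(\<lambda>\<epsilon>. spec_norm (vec_jacobian (layer_update \<epsilon> (Pmat (\<alpha> lay)) (norm_adj A) (W lay)) H) - 1)
           \<in> O[at_right 0](\<lambda>\<epsilon>. \<epsilon>\<^sup>2)"
proof -
  define K where "K X = (Pmat (\<alpha> lay) + norm_adj A) ** X ** W lay" for X :: "real^'d^'n"
  have K: "bounded_linear K"
    unfolding K_def linear_conv_bounded_linear[symmetric] by (rule linear_matrix_sandwich)
  have skew: "X \<bullet> K X = 0" for X
    unfolding K_def using assms(3)
    by (intro inner_symmetric_antisymmetric_sandwich)
      (simp_all add: transpose_add transpose_Pmat transpose_norm_adj[OF assms(1)])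
  have jacobian: "spec_norm (vec_jacobian (layer_update \<epsilon> (Pmat (\<alpha> lay)) (norm_adj A) (W lay)) H)
      = onorm (\<lambda>X. X + \<epsilon> *\<^sub>R K X)" for \<epsilon>
    unfolding layer_update_eq K_def[symmetric]
    by (intro spec_norm_vec_jacobian_linear bounded_linear.linear bounded_linear_id_plus_scaleR K)
  show ?thesis
  proof (rule bigoI[where c = "(onorm K)\<^sup>2"], intro always_eventually allI)
    fix \<epsilon> :: real
    show "norm (spec_norm (vec_jacobian (layer_update \<epsilon> (Pmat (\<alpha> lay)) (norm_adj A) (W lay)) H) - 1)
        \<le> (onorm K)\<^sup>2 * norm (\<epsilon>\<^sup>2)"
      using onorm_id_plus_skew_ge_1[OF K skew, of \<epsilon>] onorm_id_plus_skew_le[OF K skew, of \<epsilon>]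
      by (simp add: jacobian power_mult_distrib mult.commute)
  qed
qed

end
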